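(* Suppose a resolvable Steiner system $S(n,k-1,2)$ exists, and let $H_1,\ldots,H_t$ be graphs each of order less than $k$, where $t\le (n-1)/(k-2)$. Then $f(H_1,\ldots,H_t)\le n$.
   Context: All graphs are finite and simple; the order of a graph is its number of vertices. A graph $G$ is $(H_1,\ldots,H_t)$-full if every vertex of $G$ belongs to an induced subgraph of $G$ isomorphic to $H_i$, for each $i$. $f(H_1,\ldots,H_t)$ denotes the minimum order of an $(H_1,\ldots,H_t)$-full graph. A Steiner system $S(n,k-1,2)$ is a $(k-1)$-uniform hypergraph on $n$ vertices in which every pair of vertices lies in exactly one edge; it is resolvable if its edge set can be partitioned into perfect matchings (sets of pairwise disjoint edges whose union is the whole vertex set). *)

theory Defs
  imports Complex_Main "HOL-Library.Disjoint_Sets"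
begin

type_synonym 'a graph = "'a set \<times> 'a set set"

definition verts :: "'a graph \<Rightarrow> 'a set" where "verts G = fst G"
definition edges :: "'a graph \<Rightarrow> 'a set set" where "edges G = snd G"

definition is_graph :: "'a graph \<Rightarrow> bool" where
  "is_graph G \<longleftrightarrow> finite (verts G) \<and> verts G \<noteq> {} \<and>
     (\<forall>e\<in>edges G. e \<subseteq> verts G \<and> card e = 2)"

definition order :: "'a graph \<Rightarrow> nat" where "order G = card (verts G)"

definition induced_iso :: "'a graph \<Rightarrow> 'a set \<Rightarrow> 'b graph \<Rightarrow> bool" where
  "induced_iso G S H \<longleftrightarrow> S \<subseteq> verts G \<and>
     (\<exists>\<phi>. bij_betw \<phi> S (verts H) \<and>
        (\<forall>x\<in>S. \<forall>y\<in>S. {x, y} \<in> edges G \<longleftrightarrow> {\<phi> x, \<phi> y} \<in> edges H))"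

definition full :: "'a graph \<Rightarrow> 'b graph list \<Rightarrow> bool" where
  "full G Hs \<longleftrightarrow> (\<forall>v\<in>verts G. \<forall>H\<in>set Hs. \<exists>S. v \<in> S \<and> induced_iso G S H)"

text \<open>f(H_1,...,H_t): minimum order of a full graph (vertices taken from nat,
  which loses no generality for finite graphs).\<close>
definition fmin :: "'b graph list \<Rightarrow> nat" where
  "fmin Hs = (LEAST m. \<exists>G :: nat graph. is_graph G \<and> full G Hs \<and> order G = m)"

definition steiner_system :: "'a set \<Rightarrow> 'a set set \<Rightarrow> nat \<Rightarrow> nat \<Rightarrow> bool" where
  "steiner_system X B n r \<longleftrightarrow> finite X \<and> card X = n \<and>
     (\<forall>b\<in>B. b \<subseteq> X \<and> card b = r) \<and>
     (\<forall>x\<in>X. \<forall>y\<in>X. x \<noteq> y \<longrightarrow> (\<exists>!b. b \<in> B \<and> x \<in> b \<and> y \<in> b))"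

definition perfect_matching :: "'a set \<Rightarrow> 'a set set \<Rightarrow> bool" where
  "perfect_matching X M \<longleftrightarrow> disjoint M \<and> \<Union>M = X"

definition resolvable :: "'a set \<Rightarrow> 'a set set \<Rightarrow> bool" where
  "resolvable X B \<longleftrightarrow> (\<exists>P. partition_on B P \<and> (\<forall>M\<in>P. perfect_matching X M))"

end

theory Submission
  imports Defs
begin

text \<open>Every point lies on \<open>(n - 1)/(k - 2)\<close> blocks, one from each parallel class, so there
  are at least \<open>t\<close> classes and each graph \<open>H\<^sub>i\<close> can be given a class of its own. On every block
  \<open>b\<close> of that class place a blow-up of \<open>H\<^sub>i\<close>: fix a surjection \<open>\<sigma> : b \<rightarrow> V(H\<^sub>i)\<close>, possible since
  \<open>|b| = k - 1 \<ge> |V(H\<^sub>i)|\<close>, and join \<open>x, y \<in> b\<close> iff \<open>\<sigma> x \<sigma> y\<close> is an edge of \<open>H\<^sub>i\<close>. Two points share at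
  most one block, so the blocks do not interfere and every transversal of the fibres of \<open>\<sigma>\<close>
  induces \<open>H\<^sub>i\<close>; as the class partitions the points, every point lies on such a transversal.\<close>

lemma card_le_surj:
  assumes "finite A" "finite B" "B \<noteq> {}" "card B \<le> card A"
  shows "\<exists>f. f ` A = B"
proof -
  obtain g where g: "g ` B \<subseteq> A" "inj_on g B" using card_le_inj[OF assms(2,1,4)] by blast
  obtain b0 where "b0 \<in> B" using assms(3) by blast
  define f where "f y = (if y \<in> g ` B then inv_into B g y else b0)" for y
  have "f ` A = B"
  proof
    show "f ` A \<subseteq> B" using \<open>b0 \<in> B\<close> by (auto simp: f_def inv_into_into)
    show "B \<subseteq> f ` A"
    proof
      fix w assume "w \<in> B"
      then have "f (g w) = w" using g by (simp add: f_def)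
      then show "w \<in> f ` A" using g \<open>w \<in> B\<close> by (metis image_eqI image_subset_iff)
    qed
  qed
  then show ?thesis by blast
qed

lemma ex_bij_betw_section:
  assumes "f ` A = B" "a \<in> A"
  shows "\<exists>S\<subseteq>A. a \<in> S \<and> bij_betw f S B"
proof -
  define g where "g w = (if w = f a then a else inv_into A f w)" for w
  have g: "g w \<in> A \<and> f (g w) = w" if "w \<in> B" for w
    using assms that by (auto simp: g_def inv_into_into f_inv_into_f)
  have "bij_betw f (g ` B) B"
    by (rule bij_betw_byWitness[where f' = g]) (use g in auto)
  moreover have "a \<in> g ` B"
    using assms by (metis g_def image_eqI)
  ultimately show ?thesis using g by blast
qed

definition map_graph :: "('a \<Rightarrow> 'c) \<Rightarrow> 'a graph \<Rightarrow> 'c graph" where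
  "map_graph f G = (f ` verts G, (`) f ` edges G)"

lemma verts_map_graph [simp]: "verts (map_graph f G) = f ` verts G"
  and edges_map_graph [simp]: "edges (map_graph f G) = (`) f ` edges G"
  by (simp_all add: map_graph_def verts_def edges_def)

lemma is_graph_map_graph:
  assumes "is_graph G" "inj_on f (verts G)"
  shows "is_graph (map_graph f G)"
  unfolding is_graph_def
proof (intro conjI ballI)
  fix e assume "e \<in> edges (map_graph f G)"
  then obtain e0 where "e0 \<in> edges G" "e = f ` e0" by auto
  moreover have "e0 \<subseteq> verts G" "card e0 = 2" using assms(1) \<open>e0 \<in> edges G\<close> by (simp_all add: is_graph_def)
  ultimately show "e \<subseteq> verts (map_graph f G)" "card e = 2"
    using card_image[OF inj_on_subset[OF assms(2)]] by auto
qed (use assms(1) in \<open>simp_all add: is_graph_def\<close>)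

lemma map_graph_edge_iff:
  assumes "is_graph G" "inj_on f (verts G)" "x \<in> verts G" "y \<in> verts G"
  shows "{f x, f y} \<in> edges (map_graph f G) \<longleftrightarrow> {x, y} \<in> edges G"
proof
  assume "{f x, f y} \<in> edges (map_graph f G)"
  then obtain e where e: "e \<in> edges G" "f ` e = f ` {x, y}" by auto
  moreover have "e \<subseteq> verts G" using assms(1) e(1) by (simp add: is_graph_def)
  ultimately show "{x, y} \<in> edges G"
    using assms(2-4) by (metis empty_subsetI insert_subset inj_on_image_eq_iff)
qed (metis edges_map_graph image_eqI image_empty image_insert)

lemma induced_iso_map_graph:
  assumes "is_graph G" "inj_on f (verts G)" "induced_iso G S H"
  shows "induced_iso (map_graph f G) (f ` S) H"
proof -
  obtain \<phi> where S: "S \<subseteq> verts G" and \<phi>: "bij_betw \<phi> S (verts H)"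
    and \<phi>_edges: "\<forall>x\<in>S. \<forall>y\<in>S. {x, y} \<in> edges G \<longleftrightarrow> {\<phi> x, \<phi> y} \<in> edges H"
    using assms(3) unfolding induced_iso_def by blast
  have inj: "inj_on f S" using assms(2) S by (rule inj_on_subset)
  define \<psi> where "\<psi> = \<phi> \<circ> inv_into S f"
  have "bij_betw \<psi> (f ` S) (verts H)"
    unfolding \<psi>_def using bij_betw_inv_into[OF inj_on_imp_bij_betw[OF inj]] \<phi>
    by (rule bij_betw_trans)
  moreover have "\<forall>x'\<in>f ` S. \<forall>y'\<in>f ` S.
      {x', y'} \<in> edges (map_graph f G) \<longleftrightarrow> {\<psi> x', \<psi> y'} \<in> edges H"
  proof (intro ballI)
    fix x' y' assume "x' \<in> f ` S" "y' \<in> f ` S"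
    then obtain x y where xy: "x \<in> S" "y \<in> S" "x' = f x" "y' = f y" by blast
    then have "\<psi> x' = \<phi> x" "\<psi> y' = \<phi> y" using inj by (simp_all add: \<psi>_def)
    then show "{x', y'} \<in> edges (map_graph f G) \<longleftrightarrow> {\<psi> x', \<psi> y'} \<in> edges H"
      using xy S \<phi>_edges map_graph_edge_iff[OF assms(1,2), of x y] by (simp add: subsetD)
  qed
  ultimately show ?thesis
    unfolding induced_iso_def using S by auto
qed

lemma full_map_graph:
  assumes "is_graph G" "inj_on f (verts G)" "full G Hs"
  shows "full (map_graph f G) Hs"
  unfolding full_def
proof (intro ballI)
  fix v' H assume "v' \<in> verts (map_graph f G)" "H \<in> set Hs"
  then obtain v where "v \<in> verts G" "v' = f v" by (auto simp only: verts_map_graph)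
  then obtain S where "v \<in> S" "induced_iso G S H"
    using assms(3) \<open>H \<in> set Hs\<close> unfolding full_def by blast
  then have "v' \<in> f ` S" "induced_iso (map_graph f G) (f ` S) H"
    using \<open>v' = f v\<close> induced_iso_map_graph[OF assms(1,2)] by simp_all
  then show "\<exists>S. v' \<in> S \<and> induced_iso (map_graph f G) S H" by blast
qed

text \<open>\<^const>\<open>fmin\<close> only ranges over graphs on \<^typ>\<open>nat\<close>; a full graph on any finite vertex type
  is transported there along an injection.\<close>
lemma fmin_le_order:
  assumes "is_graph G" "full G Hs"
  shows "fmin Hs \<le> order G"
proof -
  have "finite (verts G)" using assms(1) by (simp add: is_graph_def)
  then obtain f :: "'a \<Rightarrow> nat" where f: "inj_on f (verts G)"
    using finite_imp_inj_to_nat_seg by blast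
  let ?G = "map_graph f G"
  have "is_graph ?G \<and> full ?G Hs \<and> order ?G = order G"
    using is_graph_map_graph[OF assms(1) f] full_map_graph[OF assms(1) f assms(2)]
    by (simp add: order_def card_image[OF f])
  then show ?thesis
    unfolding fmin_def by (rule Least_le[where k = "order G", OF exI])
qed

definition linear_hypergraph :: "'a set set \<Rightarrow> bool" where
  "linear_hypergraph C \<longleftrightarrow>
     (\<forall>b\<in>C. \<forall>b'\<in>C. \<forall>x y. x \<noteq> y \<and> x \<in> b \<and> y \<in> b \<and> x \<in> b' \<and> y \<in> b' \<longrightarrow> b = b')"

lemma linear_hypergraph_subset: "linear_hypergraph B \<Longrightarrow> C \<subseteq> B \<Longrightarrow> linear_hypergraph C"
  unfolding linear_hypergraph_def by blast

lemma linear_hypergraph_steiner_system: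
  assumes "steiner_system X B n r"
  shows "linear_hypergraph B"
  unfolding linear_hypergraph_def
proof (intro ballI allI impI)
  fix b b' x y assume "b \<in> B" "b' \<in> B" and xy: "x \<noteq> y \<and> x \<in> b \<and> y \<in> b \<and> x \<in> b' \<and> y \<in> b'"
  then have "x \<in> X" "y \<in> X" using assms unfolding steiner_system_def by auto
  then have "\<exists>!b. b \<in> B \<and> x \<in> b \<and> y \<in> b"
    using assms xy unfolding steiner_system_def by blast
  then show "b = b'" using \<open>b \<in> B\<close> \<open>b' \<in> B\<close> xy by blast
qed

text \<open>On each block \<open>b \<in> C\<close> this is the blow-up of \<open>H b\<close> along \<open>\<sigma> b\<close>: points of \<open>b\<close> with
  the same image are non-adjacent.\<close>
definition block_graph ::
    "'a set \<Rightarrow> 'a set set \<Rightarrow> ('a set \<Rightarrow> 'b graph) \<Rightarrow> ('a set \<Rightarrow> 'a \<Rightarrow> 'b) \<Rightarrow> 'a graph" where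
  "block_graph X C H \<sigma> =
     (X, {{x, y} | x y b. b \<in> C \<and> x \<in> b \<and> y \<in> b \<and> {\<sigma> b x, \<sigma> b y} \<in> edges (H b)})"

lemma verts_block_graph [simp]: "verts (block_graph X C H \<sigma>) = X"
  by (simp add: block_graph_def verts_def)

lemma edges_block_graph:
  "edges (block_graph X C H \<sigma>) =
     {{x, y} | x y b. b \<in> C \<and> x \<in> b \<and> y \<in> b \<and> {\<sigma> b x, \<sigma> b y} \<in> edges (H b)}"
  by (simp add: block_graph_def edges_def)

lemma card_doubleton_eq_2_iff: "card {x, y} = 2 \<longleftrightarrow> x \<noteq> y"
  by (cases "x = y") simp_all

lemma is_graph_block_graph:
  assumes "finite X" "X \<noteq> {}" "\<forall>b\<in>C. b \<subseteq> X \<and> is_graph (H b)"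
  shows "is_graph (block_graph X C H \<sigma>)"
  using assms unfolding is_graph_def edges_block_graph
  by (fastforce simp: card_doubleton_eq_2_iff)

lemma block_graph_edge_iff:
  assumes "linear_hypergraph C"
    and graphs: "\<forall>b\<in>C. is_graph (H b)"
    and "b \<in> C" "x \<in> b" "y \<in> b"
  shows "{x, y} \<in> edges (block_graph X C H \<sigma>) \<longleftrightarrow> {\<sigma> b x, \<sigma> b y} \<in> edges (H b)"
proof
  assume "{x, y} \<in> edges (block_graph X C H \<sigma>)"
  then obtain x' y' b' where e: "{x, y} = {x', y'}" "b' \<in> C" "x' \<in> b'" "y' \<in> b'"
      "{\<sigma> b' x', \<sigma> b' y'} \<in> edges (H b')"
    unfolding edges_block_graph by blast
  have "x' \<noteq> y'"
    using graphs e(2,5) unfolding is_graph_def by (metis card_doubleton_eq_2_iff insert_absorb2)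
  then have "b' = b"
    using assms(1) e(1-4) \<open>b \<in> C\<close> \<open>x \<in> b\<close> \<open>y \<in> b\<close> unfolding linear_hypergraph_def
    by (metis doubleton_eq_iff)
  then show "{\<sigma> b x, \<sigma> b y} \<in> edges (H b)"
    using e(1,5) by (metis doubleton_eq_iff insert_commute)
qed (use assms(3-5) in \<open>auto simp: edges_block_graph\<close>)

lemma full_block_graph:
  assumes "linear_hypergraph C"
    and blocks: "\<forall>b\<in>C. b \<subseteq> X \<and> is_graph (H b) \<and> \<sigma> b ` b = verts (H b)"
    and covered: "\<forall>v\<in>X. \<forall>G\<in>set Hs. \<exists>b\<in>C. v \<in> b \<and> H b = G"
  shows "full (block_graph X C H \<sigma>) Hs"
  unfolding full_def verts_block_graph
proof (intro ballI)
  fix v G assume "v \<in> X" "G \<in> set Hs"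
  then obtain b where b: "b \<in> C" "v \<in> b" "H b = G" using covered by blast
  then have "b \<subseteq> X" "\<sigma> b ` b = verts (H b)" using blocks by simp_all
  then obtain S where S: "S \<subseteq> b" "v \<in> S" "bij_betw (\<sigma> b) S (verts (H b))"
    using ex_bij_betw_section b(2) by metis
  have graphs: "\<forall>b\<in>C. is_graph (H b)" using blocks by simp
  have "\<forall>x\<in>S. \<forall>y\<in>S. {x, y} \<in> edges (block_graph X C H \<sigma>) \<longleftrightarrow> {\<sigma> b x, \<sigma> b y} \<in> edges (H b)"
    using block_graph_edge_iff[OF assms(1) graphs b(1)] S(1) by (simp add: subsetD)
  then have "induced_iso (block_graph X C H \<sigma>) S G"
    unfolding induced_iso_def using S \<open>b \<subseteq> X\<close> b(3) by auto
  then show "\<exists>S. v \<in> S \<and> induced_iso (block_graph X C H \<sigma>) S G" using S(2) by blast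
qed

lemma ex_full_graph_on_blocks:
  assumes "finite X" "X \<noteq> {}" "linear_hypergraph C"
    and blocks: "\<forall>b\<in>C. b \<subseteq> X \<and> is_graph (H b) \<and> card (verts (H b)) \<le> card b"
    and covered: "\<forall>v\<in>X. \<forall>G\<in>set Hs. \<exists>b\<in>C. v \<in> b \<and> H b = G"
  shows "\<exists>G. is_graph G \<and> full G Hs \<and> verts G = X"
proof -
  define \<sigma> where "\<sigma> b = (SOME f. f ` b = verts (H b))" for b
  have "\<sigma> b ` b = verts (H b)" if b: "b \<in> C" for b
  proof -
    have "b \<subseteq> X" "is_graph (H b)" "card (verts (H b)) \<le> card b" using blocks b by simp_all
    moreover have "finite b" using \<open>b \<subseteq> X\<close> \<open>finite X\<close> by (rule finite_subset)
    ultimately have "\<exists>f. f ` b = verts (H b)"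
      using card_le_surj[of b "verts (H b)"] unfolding is_graph_def by simp
    then show ?thesis unfolding \<sigma>_def by (rule someI_ex)
  qed
  then have \<sigma>_blocks: "\<forall>b\<in>C. b \<subseteq> X \<and> is_graph (H b) \<and> \<sigma> b ` b = verts (H b)"
    using blocks by simp
  then have "\<forall>b\<in>C. b \<subseteq> X \<and> is_graph (H b)" by simp
  then have "is_graph (block_graph X C H \<sigma>)" by (rule is_graph_block_graph[OF assms(1,2)])
  moreover have "full (block_graph X C H \<sigma>) Hs"
    using assms(3) \<sigma>_blocks covered by (rule full_block_graph)
  ultimately show ?thesis by (intro exI[of _ "block_graph X C H \<sigma>"]) simp
qed

lemma steiner_system_finite_blocks:
  assumes "steiner_system X B n r"
  shows "finite B"
proof -
  have "B \<subseteq> Pow X" "finite X" using assms unfolding steiner_system_def by auto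
  then show ?thesis by (simp add: finite_subset)
qed

lemma steiner_system_card_blocks_through:
  assumes "steiner_system X B n r" "x \<in> X"
  shows "card {b\<in>B. x \<in> b} * (r - 1) = n - 1"
proof -
  let ?Bx = "{b\<in>B. x \<in> b}"
  from assms(1) have X: "finite X" "card X = n" and blocks: "\<forall>b\<in>B. b \<subseteq> X \<and> card b = r"
    and unique: "\<forall>y\<in>X. \<forall>z\<in>X. y \<noteq> z \<longrightarrow> (\<exists>!b. b \<in> B \<and> y \<in> b \<and> z \<in> b)"
    unfolding steiner_system_def by blast+
  have "finite ?Bx" using steiner_system_finite_blocks[OF assms(1)] by simp
  have "X - {x} \<subseteq> (\<Union>b\<in>?Bx. b - {x})"
  proof
    fix y assume "y \<in> X - {x}"
    then obtain b where "b \<in> B" "x \<in> b" "y \<in> b" using unique assms(2) by blast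
    then show "y \<in> (\<Union>b\<in>?Bx. b - {x})" using \<open>y \<in> X - {x}\<close> by blast
  qed
  moreover have "(\<Union>b\<in>?Bx. b - {x}) \<subseteq> X - {x}" using blocks by blast
  ultimately have X_minus: "X - {x} = (\<Union>b\<in>?Bx. b - {x})" by (rule antisym)
  have "disjoint_family_on (\<lambda>b. b - {x}) ?Bx"
    unfolding disjoint_family_on_def
  proof (intro ballI impI)
    fix b b' assume "b \<in> ?Bx" "b' \<in> ?Bx" "b \<noteq> b'"
    then show "(b - {x}) \<inter> (b' - {x}) = {}"
      using linear_hypergraph_steiner_system[OF assms(1)] unfolding linear_hypergraph_def by blast
  qed
  then have "card (X - {x}) = (\<Sum>b\<in>?Bx. card (b - {x}))"
    unfolding X_minus using \<open>finite ?Bx\<close> X(1) blocks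
    by (intro card_UN_disjoint') (auto intro: finite_subset)
  also have "\<dots> = card ?Bx * (r - 1)"
    using blocks by simp
  finally show ?thesis
    using X assms(2) by simp
qed

lemma card_blocks_through_le_card_classes:
  assumes "finite P" "partition_on B P" "\<forall>M\<in>P. disjoint M"
  shows "card {b\<in>B. x \<in> b} \<le> card P"
proof -
  define part where "part b = (SOME M. M \<in> P \<and> b \<in> M)" for b
  have part: "part b \<in> P \<and> b \<in> part b" if b: "b \<in> B" for b
  proof -
    obtain M where "M \<in> P" "b \<in> M" using b partition_onD1[OF assms(2)] by blast
    then show ?thesis unfolding part_def by (rule someI[where x = M, OF conjI])
  qed
  have "inj_on part {b\<in>B. x \<in> b}"
  proof (rule inj_onI)
    fix b b' assume b: "b \<in> {b\<in>B. x \<in> b}" and b': "b' \<in> {b\<in>B. x \<in> b}"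
      and "part b = part b'"
    then have "b \<in> part b" "b' \<in> part b" "disjoint (part b)" using part assms(3) by auto
    moreover have "\<not> disjnt b b'" using b b' by (auto simp: disjnt_def)
    ultimately show "b = b'" by (meson pairwiseD)
  qed
  moreover have "part ` {b\<in>B. x \<in> b} \<subseteq> P" using part by auto
  ultimately show ?thesis using assms(1) by (rule card_inj_on_le)
qed

lemma resolvable_steiner_system_card_classes:
  assumes "steiner_system X B n r" "partition_on B P" "\<forall>M\<in>P. perfect_matching X M" "r \<ge> 1"
  shows "(real n - 1) / (real r - 1) \<le> real (card P)"
proof (cases "X = {} \<or> r = 1")
  case True
  \<comment> \<open>then the left-hand side is \<open>\<le> 0\<close>; for \<open>r = 1\<close> it is a division by zero, hence \<open>0\<close>\<close>
  then have "n = 0 \<or> r = 1" using assms(1) unfolding steiner_system_def by auto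
  moreover have "0 \<le> real r - 1" using assms(4) by simp
  ultimately have "(real n - 1) / (real r - 1) \<le> 0"
    using divide_nonpos_nonneg[of "real n - 1" "real r - 1"] by auto
  then show ?thesis by (meson of_nat_0_le_iff order_trans)
next
  case False
  then obtain x where x: "x \<in> X" and "r \<ge> 2" using assms(4) by fastforce
  have "finite P"
    using steiner_system_finite_blocks[OF assms(1)] assms(2) by (rule finite_elements)
  moreover have "\<forall>M\<in>P. disjoint M" using assms(3) by (simp add: perfect_matching_def)
  ultimately have "card {b\<in>B. x \<in> b} \<le> card P"
    using assms(2) card_blocks_through_le_card_classes by metis
  moreover have "n \<ge> 1"
    using x assms(1) unfolding steiner_system_def by (auto simp: Suc_le_eq card_gt_0_iff)
  then have "real n - 1 = real (card {b\<in>B. x \<in> b} * (r - 1))"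
    using steiner_system_card_blocks_through[OF assms(1) x] by simp
  then have "real n - 1 = real (card {b\<in>B. x \<in> b}) * (real r - 1)"
    using \<open>r \<ge> 2\<close> by simp
  ultimately show ?thesis using \<open>r \<ge> 2\<close> by simp
qed

lemma ex_block_labelling:
  assumes "partition_on B P" "\<forall>M\<in>P. perfect_matching X M" "finite P" "finite A" "card A \<le> card P"
  shows "\<exists>C h. C \<subseteq> B \<and> h ` C \<subseteq> A \<and> (\<forall>x\<in>X. \<forall>a\<in>A. \<exists>b\<in>C. x \<in> b \<and> h b = a)"
proof -
  obtain c where c: "c ` A \<subseteq> P" "inj_on c A" using card_le_inj[OF assms(4,3,5)] by blast
  define h where "h b = (SOME a. a \<in> A \<and> b \<in> c a)" for b
  have h: "h b = a" if a: "a \<in> A" "b \<in> c a" for a b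
  proof -
    have hb: "h b \<in> A \<and> b \<in> c (h b)"
      unfolding h_def using a by (rule someI[where x = a, OF conjI])
    then have "c (h b) \<in> P" "c a \<in> P" "\<not> disjnt (c (h b)) (c a)"
      using c(1) a by (auto simp: disjnt_def)
    then have "c (h b) = c a" using partition_onD2[OF assms(1)] by (meson pairwiseD)
    then show ?thesis using inj_onD[OF c(2)] hb a(1) by blast
  qed
  have "\<Union>(c ` A) \<subseteq> B" using c(1) partition_onD1[OF assms(1)] by auto
  moreover have "h ` \<Union>(c ` A) \<subseteq> A" using h by auto
  moreover have "\<forall>x\<in>X. \<forall>a\<in>A. \<exists>b\<in>\<Union>(c ` A). x \<in> b \<and> h b = a"
  proof (intro ballI)
    fix x a assume "x \<in> X" "a \<in> A"
    then have "\<Union>(c a) = X" using assms(2) c(1) by (auto simp: perfect_matching_def)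
    then obtain b where "b \<in> c a" "x \<in> b" using \<open>x \<in> X\<close> by blast
    then show "\<exists>b\<in>\<Union>(c ` A). x \<in> b \<and> h b = a" using h \<open>a \<in> A\<close> by blast
  qed
  ultimately show ?thesis by blast
qed

lemma ex_full_graph_resolvable:
  assumes "finite X" "X \<noteq> {}" "linear_hypergraph B"
    and "partition_on B P" "\<forall>M\<in>P. perfect_matching X M" "card (set Hs) \<le> card P"
    and blocks: "\<forall>b\<in>B. b \<subseteq> X \<and> (\<forall>H\<in>set Hs. is_graph H \<and> card (verts H) \<le> card b)"
  shows "\<exists>G. is_graph G \<and> full G Hs \<and> verts G = X"
proof -
  have "B \<subseteq> Pow X" using blocks by blast
  then have "finite B" using assms(1) by (simp add: finite_subset)
  then have "finite P" using assms(4) by (rule finite_elements)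
  then obtain C h where C: "C \<subseteq> B" "h ` C \<subseteq> set Hs"
    and covered: "\<forall>x\<in>X. \<forall>H\<in>set Hs. \<exists>b\<in>C. x \<in> b \<and> h b = H"
    using ex_block_labelling[OF assms(4,5) _ finite_set assms(6)] by blast
  have "linear_hypergraph C" using assms(3) C(1) by (rule linear_hypergraph_subset)
  moreover have "\<forall>b\<in>C. b \<subseteq> X \<and> is_graph (h b) \<and> card (verts (h b)) \<le> card b"
    using C blocks by blast
  ultimately show ?thesis using ex_full_graph_on_blocks[OF assms(1,2)] covered by blast
qed

theorem theorem2p2:
  fixes X :: "'a set" and B :: "'a set set" and Hs :: "'b graph list" and n k :: nat
  assumes "k \<ge> 3"
    and "steiner_system X B n (k - 1)" and "resolvable X B"
    and "\<forall>H\<in>set Hs. is_graph H \<and> order H < k"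
    and "real (length Hs) \<le> (real n - 1) / (real k - 2)"
  shows "fmin Hs \<le> n"
proof -
  from assms(2) have X: "finite X" "card X = n" and blocks: "\<forall>b\<in>B. b \<subseteq> X \<and> card b = k - 1"
    unfolding steiner_system_def by blast+
  obtain P where P: "partition_on B P" "\<forall>M\<in>P. perfect_matching X M"
    using assms(3) unfolding resolvable_def by blast
  have "0 \<le> (real n - 1) / (real k - 2)"
    using assms(5) of_nat_0_le_iff order_trans by blast
  then have "X \<noteq> {}" using assms(1) X(2) by (auto simp: zero_le_divide_iff)
  have "1 \<le> k - 1" using assms(1) by simp
  then have "real (length Hs) \<le> real (card P)"
    using resolvable_steiner_system_card_classes[OF assms(2) P] assms(1,5) by simp
  then have "card (set Hs) \<le> card P" using card_length[of Hs] by linarith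
  moreover have "\<forall>b\<in>B. b \<subseteq> X \<and> (\<forall>H\<in>set Hs. is_graph H \<and> card (verts H) \<le> card b)"
    using blocks assms(4) unfolding order_def by fastforce
  ultimately obtain G where "is_graph G" "full G Hs" "verts G = X"
    using ex_full_graph_resolvable[OF X(1) \<open>X \<noteq> {}\<close> linear_hypergraph_steiner_system[OF assms(2)] P]
    by blast
  then show ?thesis using fmin_le_order X(2) unfolding order_def by metis
qed

end
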